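(* Let $W$ be a $\mathbb Z/2$-graded vector space, $\nu\in\mathbb Z/2$, and $\{-,-\}:W\otimes W\to W$ a bilinear operation of degree $\nu$ satisfying $\{u,v\}=-(-1)^{(|u|+\nu)(|v|+\nu)}\{v,u\}$. Suppose there is a trilinear operation $\alpha(u|v,w)$ of degree $0$ satisfying $\alpha(u|v,w)=(-1)^{(|v|+\nu)(|w|+\nu)}\alpha(u|w,v)$, such that for all homogeneous $u,v,w$, $$\{\{u,v\},w\}=\alpha(u|v,w)-(-1)^{(|u|+\nu)(|v|+\nu)}\alpha(v|u,w).$$ Then $\{-,-\}$ is a graded Lie bracket, i.e. $\{u,\{v,w\}\}-(-1)^{(|u|+\nu)(|v|+\nu)}\{v,\{u,w\}\}=\{\{u,v\},w\}$ for all homogeneous $u,v,w$.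
   Context: $|u|\in\mathbb Z/2$ denotes the parity of a homogeneous element; an operation of degree $\nu$ shifts parity by $\nu$. *)

theory Defs
  imports Complex_Main
begin

text \<open>Parities in Z/2 are represented by bool: False = 0, True = 1;
  addition is exclusive or (a \<noteq> b), multiplication is conjunction.\<close>

definition psign :: "bool \<Rightarrow> 'w::group_add \<Rightarrow> 'w" where
  "psign e x = (if e then - x else x)"

text \<open>A Z/2-graded vector space over the field 'k: W d is the subspace of
  homogeneous elements of parity d, and the ambient space is W False (+) W True.\<close>

definition graded_vs :: "('k::field \<Rightarrow> 'w::ab_group_add \<Rightarrow> 'w) \<Rightarrow> (bool \<Rightarrow> 'w set) \<Rightarrow> bool" where
  "graded_vs scale W \<longleftrightarrow> vector_space scale
     \<and> (\<forall>d. module.subspace scale (W d))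
     \<and> W False \<inter> W True = {0}
     \<and> (\<forall>x. \<exists>a b. a \<in> W False \<and> b \<in> W True \<and> x = a + b)"

definition bilinear_op :: "('k::field \<Rightarrow> 'w::ab_group_add \<Rightarrow> 'w) \<Rightarrow> ('w \<Rightarrow> 'w \<Rightarrow> 'w) \<Rightarrow> bool" where
  "bilinear_op scale f \<longleftrightarrow> (\<forall>u. Vector_Spaces.linear scale scale (\<lambda>v. f u v))
     \<and> (\<forall>v. Vector_Spaces.linear scale scale (\<lambda>u. f u v))"

definition trilinear_op :: "('k::field \<Rightarrow> 'w::ab_group_add \<Rightarrow> 'w) \<Rightarrow> ('w \<Rightarrow> 'w \<Rightarrow> 'w \<Rightarrow> 'w) \<Rightarrow> bool" where
  "trilinear_op scale f \<longleftrightarrow> (\<forall>v w. Vector_Spaces.linear scale scale (\<lambda>u. f u v w))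
     \<and> (\<forall>u w. Vector_Spaces.linear scale scale (\<lambda>v. f u v w))
     \<and> (\<forall>u v. Vector_Spaces.linear scale scale (\<lambda>w. f u v w))"

end

theory Submission
  imports Defs
begin

text \<open>Write \<open>p, q, r\<close> for the shifted parities \<open>|u| + \<nu>, |v| + \<nu>, |w| + \<nu>\<close>. Skew-symmetry
  turns \<open>{u,{v,w}}\<close> into \<open>-(-1)^(p(q+r)) {{v,w},u}\<close>; expanding this by the hypothesis on
  \<open>\<alpha>\<close> and reordering the last two arguments of \<open>\<alpha>\<close> by its symmetry gives
  \<open>{u,{v,w}} = (-1)^((p+q)r) \<alpha>(w|u,v) - (-1)^(pq) \<alpha>(v|u,w)\<close>, where \<open>p + q = |u| + |v|\<close>.
  In the graded Jacobi expression the two \<open>\<alpha>(w|-,-)\<close> terms then cancel, leaving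
  \<open>\<alpha>(u|v,w) - (-1)^(pq) \<alpha>(v|u,w) = {{u,v},w}\<close>.\<close>

locale alpha_bracket =
  fixes W :: "bool \<Rightarrow> 'w::ab_group_add set"
    and nu :: bool
    and br :: "'w \<Rightarrow> 'w \<Rightarrow> 'w"
    and alpha :: "'w \<Rightarrow> 'w \<Rightarrow> 'w \<Rightarrow> 'w"
  assumes br_degree: "\<And>a b u v. u \<in> W a \<Longrightarrow> v \<in> W b \<Longrightarrow> br u v \<in> W ((a \<noteq> b) \<noteq> nu)"
    and br_skew: "\<And>a b u v. u \<in> W a \<Longrightarrow> v \<in> W b \<Longrightarrow>
                     br u v = - psign ((a \<noteq> nu) \<and> (b \<noteq> nu)) (br v u)"
    and alpha_sym: "\<And>a b c u v w. u \<in> W a \<Longrightarrow> v \<in> W b \<Longrightarrow> w \<in> W c \<Longrightarrow>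
                     alpha u v w = psign ((b \<noteq> nu) \<and> (c \<noteq> nu)) (alpha u w v)"
    and br_br_left: "\<And>a b c u v w. u \<in> W a \<Longrightarrow> v \<in> W b \<Longrightarrow> w \<in> W c \<Longrightarrow>
                     br (br u v) w = alpha u v w - psign ((a \<noteq> nu) \<and> (b \<noteq> nu)) (alpha v u w)"
begin

lemma br_br_right:
  assumes u: "u \<in> W a" and v: "v \<in> W b" and w: "w \<in> W c"
  shows "br u (br v w) =
    psign ((a \<noteq> b) \<and> (c \<noteq> nu)) (alpha w u v) - psign ((a \<noteq> nu) \<and> (b \<noteq> nu)) (alpha v u w)"
proof -
  have "br u (br v w) = - psign ((a \<noteq> nu) \<and> (b \<noteq> c)) (br (br v w) u)"
    using br_skew[OF u br_degree[OF v w]] by (cases nu) simp_all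
  also have "br (br v w) u = alpha v w u - psign ((b \<noteq> nu) \<and> (c \<noteq> nu)) (alpha w v u)"
    using br_br_left[OF v w u] .
  also have "alpha v w u = psign ((c \<noteq> nu) \<and> (a \<noteq> nu)) (alpha v u w)"
    using alpha_sym[OF v w u] .
  also have "alpha w v u = psign ((b \<noteq> nu) \<and> (a \<noteq> nu)) (alpha w u v)"
    using alpha_sym[OF w v u] .
  finally show ?thesis
    by (cases a; cases b; cases c; cases nu) (simp_all add: psign_def)
qed

theorem graded_jacobi:
  assumes u: "u \<in> W a" and v: "v \<in> W b" and w: "w \<in> W c"
  shows "br u (br v w) - psign ((a \<noteq> nu) \<and> (b \<noteq> nu)) (br v (br u w)) = br (br u v) w"
  unfolding br_br_right[OF u v w] br_br_right[OF v u w] br_br_left[OF u v w]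
    alpha_sym[OF w v u]
  by (cases a; cases b; cases c; cases nu) (simp_all add: psign_def)

end

theorem mainTheorem8:
  fixes scale :: "'k::field \<Rightarrow> 'w::ab_group_add \<Rightarrow> 'w"
    and W :: "bool \<Rightarrow> 'w set"
    and nu :: bool
    and br :: "'w \<Rightarrow> 'w \<Rightarrow> 'w"
    and alpha :: "'w \<Rightarrow> 'w \<Rightarrow> 'w \<Rightarrow> 'w"
  assumes graded: "graded_vs scale W"
    and br_bilinear: "bilinear_op scale br"
    and br_degree: "\<And>a b u v. u \<in> W a \<Longrightarrow> v \<in> W b \<Longrightarrow> br u v \<in> W ((a \<noteq> b) \<noteq> nu)"
    and br_skew: "\<And>a b u v. u \<in> W a \<Longrightarrow> v \<in> W b \<Longrightarrow>
                     br u v = - psign ((a \<noteq> nu) \<and> (b \<noteq> nu)) (br v u)"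
    and alpha_trilinear: "trilinear_op scale alpha"
    and alpha_degree: "\<And>a b c u v w. u \<in> W a \<Longrightarrow> v \<in> W b \<Longrightarrow> w \<in> W c \<Longrightarrow>
                     alpha u v w \<in> W ((a \<noteq> b) \<noteq> c)"
    and alpha_sym: "\<And>a b c u v w. u \<in> W a \<Longrightarrow> v \<in> W b \<Longrightarrow> w \<in> W c \<Longrightarrow>
                     alpha u v w = psign ((b \<noteq> nu) \<and> (c \<noteq> nu)) (alpha u w v)"
    and jac: "\<And>a b c u v w. u \<in> W a \<Longrightarrow> v \<in> W b \<Longrightarrow> w \<in> W c \<Longrightarrow>
                     br (br u v) w = alpha u v w - psign ((a \<noteq> nu) \<and> (b \<noteq> nu)) (alpha v u w)"
  shows "\<And>a b c u v w. u \<in> W a \<Longrightarrow> v \<in> W b \<Longrightarrow> w \<in> W c \<Longrightarrow>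
           br u (br v w) - psign ((a \<noteq> nu) \<and> (b \<noteq> nu)) (br v (br u w)) = br (br u v) w"
proof -
  interpret alpha_bracket W nu br alpha
    using br_degree br_skew alpha_sym jac by unfold_locales
  show "\<And>a b c u v w. u \<in> W a \<Longrightarrow> v \<in> W b \<Longrightarrow> w \<in> W c \<Longrightarrow>
      br u (br v w) - psign ((a \<noteq> nu) \<and> (b \<noteq> nu)) (br v (br u w)) = br (br u v) w"
    by (rule graded_jacobi)
qed

end
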